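(* Let $(S,\triangleleft)$ be a poset. If $\mathrm H^2_{\rm CW}(\mathscr K(S,\triangleleft);\mathbb Z_2)=0$, then there exists a sign assignment on $(S,\triangleleft)$.
   Context: In a poset, $x\,\tilde\triangleleft\,y$ ($y$ covers $x$) means $x\triangleleft y$ with no element strictly between. A square consists of $x,y,y',z$ with $y\neq y'$, $x\,\tilde\triangleleft\,y\,\tilde\triangleleft\,z$ and $x\,\tilde\triangleleft\,y'\,\tilde\triangleleft\,z$. A sign assignment assigns $\epsilon_{x,y}\in\mathbb Z_2$ to each covering pair such that $\epsilon_{x,y}+\epsilon_{y,z}\equiv\epsilon_{x,y'}+\epsilon_{y',z}+1\pmod 2$ for every square. $\mathscr K(S,\triangleleft)$ is the CW-complex obtained from the geometric realization of the Hasse graph of $S$ (vertices the elements of $S$, an edge for each covering pair) by attaching a $2$-cell along each square; $\mathrm H^*_{\rm CW}(-;\mathbb Z_2)$ is its cellular cohomology with $\mathbb Z_2$ coefficients. *)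

theory Defs
  imports Main "HOL-Library.Z2"
begin

text \<open>A poset is given by a carrier S inside a type of class order; the strict
order is the type's strict order restricted to S.  Coefficients Z_2 are the
library type bit.\<close>

definition covers :: "'a::order set \<Rightarrow> 'a \<Rightarrow> 'a \<Rightarrow> bool" where
  "covers S x y \<longleftrightarrow> x \<in> S \<and> y \<in> S \<and> x < y \<and> \<not> (\<exists>w\<in>S. x < w \<and> w < y)"

definition is_square :: "'a::order set \<Rightarrow> 'a \<Rightarrow> 'a \<Rightarrow> 'a \<Rightarrow> 'a \<Rightarrow> bool" where
  "is_square S x y y' z \<longleftrightarrow> y \<noteq> y' \<and> covers S x y \<and> covers S y z \<and>
      covers S x y' \<and> covers S y' z"

definition sign_assignment :: "'a::order set \<Rightarrow> ('a \<times> 'a \<Rightarrow> bit) \<Rightarrow> bool" where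
  "sign_assignment S \<epsilon> \<longleftrightarrow>
     (\<forall>x y y' z. is_square S x y y' z \<longrightarrow>
        \<epsilon> (x, y) + \<epsilon> (y, z) = \<epsilon> (x, y') + \<epsilon> (y', z) + 1)"

text \<open>Cells of the CW complex K(S): 1-cells are covering pairs (x,y);
2-cells are squares, indexed by (x, {y,y'}, z) (a square and its
y/y'-swap are the same square, hence the same 2-cell).\<close>

definition cells1 :: "'a::order set \<Rightarrow> ('a \<times> 'a) set" where
  "cells1 S = {(x, y). covers S x y}"

definition cells2 :: "'a::order set \<Rightarrow> ('a \<times> 'a set \<times> 'a) set" where
  "cells2 S = {(x, {y, y'}, z) | x y y' z. is_square S x y y' z}"

definition cochains1 :: "'a::order set \<Rightarrow> ('a \<times> 'a \<Rightarrow> bit) set" where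
  "cochains1 S = {f. \<forall>e. e \<notin> cells1 S \<longrightarrow> f e = 0}"

definition cochains2 :: "'a::order set \<Rightarrow> ('a \<times> 'a set \<times> 'a \<Rightarrow> bit) set" where
  "cochains2 S = {c. \<forall>s. s \<notin> cells2 S \<longrightarrow> c s = 0}"

text \<open>Cellular coboundary C^1 \<rightarrow> C^2: the 2-cell (x,{y,y'},z) is attached along
the loop x-y-z-y'-x, which passes once through each of its four edges, so
mod 2 all incidence numbers are 1.\<close>

definition coboundary1 :: "'a::order set \<Rightarrow> ('a \<times> 'a \<Rightarrow> bit) \<Rightarrow> ('a \<times> 'a set \<times> 'a \<Rightarrow> bit)" where
  "coboundary1 S f = (\<lambda>(x, Y, z).
     if (x, Y, z) \<in> cells2 S then (\<Sum>y\<in>Y. f (x, y) + f (y, z)) else 0)"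

text \<open>There are no 3-cells, so every 2-cochain is a cocycle, and
H^2_CW(K(S); Z_2) = C^2 / im(coboundary1).  It vanishes iff every 2-cochain
is a coboundary.\<close>

definition cocycles2 :: "'a::order set \<Rightarrow> ('a \<times> 'a set \<times> 'a \<Rightarrow> bit) set" where
  "cocycles2 S = cochains2 S"

definition H2_CW_trivial :: "'a::order set \<Rightarrow> bool" where
  "H2_CW_trivial S \<longleftrightarrow> cocycles2 S \<subseteq> coboundary1 S ` cochains1 S"

end

theory Submission
  imports Defs
begin

text \<open>Sign assignments are exactly the 1-cochains whose coboundary is the 2-cochain
taking the value 1 on every square; since there are no 3-cells this 2-cochain is a
cocycle, so it is a coboundary once H^2 vanishes.\<close>

lemma bit_add_eq_1_imp: "(u::bit) + v = 1 \<Longrightarrow> u = v + 1"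
  by (cases u; cases v) auto

lemma square_in_cells2: "is_square S x y y' z \<Longrightarrow> (x, {y, y'}, z) \<in> cells2 S"
  unfolding cells2_def by blast

lemma coboundary1_square:
  assumes "is_square S x y y' z"
  shows "coboundary1 S f (x, {y, y'}, z) = f (x, y) + f (y, z) + (f (x, y') + f (y', z))"
proof -
  have "y \<noteq> y'"
    using assms unfolding is_square_def by blast
  have "coboundary1 S f (x, {y, y'}, z) = (\<Sum>w\<in>{y, y'}. f (x, w) + f (w, z))"
    using square_in_cells2[OF assms] unfolding coboundary1_def by simp
  also have "\<dots> = f (x, y) + f (y, z) + (f (x, y') + f (y', z))"
    using \<open>y \<noteq> y'\<close> by (subst sum.insert) auto
  finally show ?thesis .
qed

definition square_indicator :: "'a::order set \<Rightarrow> 'a \<times> 'a set \<times> 'a \<Rightarrow> bit" where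
  "square_indicator S s = of_bool (s \<in> cells2 S)"

lemma square_indicator_in_cocycles2: "square_indicator S \<in> cocycles2 S"
  unfolding cocycles2_def cochains2_def square_indicator_def by simp

lemma sign_assignment_if_coboundary1_eq_square_indicator:
  assumes "coboundary1 S f = square_indicator S"
  shows "sign_assignment S f"
  unfolding sign_assignment_def
proof (intro allI impI)
  fix x y y' z
  assume square: "is_square S x y y' z"
  have "f (x, y) + f (y, z) + (f (x, y') + f (y', z)) = coboundary1 S f (x, {y, y'}, z)"
    by (rule coboundary1_square[OF square, symmetric])
  also have "\<dots> = 1"
    unfolding assms square_indicator_def using square_in_cells2[OF square] by simp
  finally have "f (x, y) + f (y, z) + (f (x, y') + f (y', z)) = 1" .
  then show "f (x, y) + f (y, z) = f (x, y') + f (y', z) + 1"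
    by (rule bit_add_eq_1_imp)
qed

theorem proposition3p12:
  fixes S :: "'a::order set"
  assumes "H2_CW_trivial S"
  shows "\<exists>\<epsilon>. sign_assignment S \<epsilon>"
proof -
  have "square_indicator S \<in> coboundary1 S ` cochains1 S"
    using assms square_indicator_in_cocycles2 unfolding H2_CW_trivial_def by (rule subsetD)
  then obtain f where "coboundary1 S f = square_indicator S"
    by (metis imageE)
  then have "sign_assignment S f"
    by (rule sign_assignment_if_coboundary1_eq_square_indicator)
  then show ?thesis
    by (rule exI[of "sign_assignment S"])
qed

end
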